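(* Let $M$ be a disconnected matroid. Then $M$ is $(2,2)$-uniform if and only if one of the following holds: (i) $M$ or $M^*$ is paving; or (ii) $M\cong M_p\oplus U_{0,1}$ or $M\cong M_p^*\oplus U_{1,1}$ for some paving matroid $M_p$; or (iii) $M\cong M_p\oplus U_{1,2}$ for some sparse paving matroid $M_p$.
   Context: A matroid is $(2,2)$-uniform if it has no minor isomorphic to $U_{2,2}\oplus U_{0,2}$. A matroid $M$ is paving if every flat of rank $r(M)-2$ is independent (equivalently every circuit has size at least $r(M)$). A matroid is sparse paving if both it and its dual are paving. *)

theory Defs
  imports Main
begin

type_synonym 'a matroid = "'a set \<times> 'a set set"

definition ground :: "'a matroid \<Rightarrow> 'a set" where
  "ground M = fst M"

definition indep :: "'a matroid \<Rightarrow> 'a set set" where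
  "indep M = snd M"

definition matroid :: "'a matroid \<Rightarrow> bool" where
  "matroid M \<longleftrightarrow>
     finite (ground M) \<and>
     (\<forall>I\<in>indep M. I \<subseteq> ground M) \<and>
     {} \<in> indep M \<and>
     (\<forall>X Y. Y \<in> indep M \<longrightarrow> X \<subseteq> Y \<longrightarrow> X \<in> indep M) \<and>
     (\<forall>X Y. X \<in> indep M \<longrightarrow> Y \<in> indep M \<longrightarrow> card X < card Y \<longrightarrow>
        (\<exists>y\<in>Y - X. insert y X \<in> indep M))"

definition basis :: "'a matroid \<Rightarrow> 'a set \<Rightarrow> bool" where
  "basis M B \<longleftrightarrow> B \<in> indep M \<and> (\<forall>I\<in>indep M. B \<subseteq> I \<longrightarrow> I = B)"

definition circuit :: "'a matroid \<Rightarrow> 'a set \<Rightarrow> bool" where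
  "circuit M C \<longleftrightarrow> C \<subseteq> ground M \<and> C \<notin> indep M \<and> (\<forall>x\<in>C. C - {x} \<in> indep M)"

definition rk :: "'a matroid \<Rightarrow> 'a set \<Rightarrow> nat" where
  "rk M X = Max (card ` {I \<in> indep M. I \<subseteq> X})"

definition dual :: "'a matroid \<Rightarrow> 'a matroid" where
  "dual M = (ground M, {X. X \<subseteq> ground M \<and> (\<exists>B. basis M B \<and> X \<inter> B = {})})"

definition delete :: "'a matroid \<Rightarrow> 'a set \<Rightarrow> 'a matroid" where
  "delete M D = (ground M - D, {I \<in> indep M. I \<inter> D = {}})"

definition contract :: "'a matroid \<Rightarrow> 'a set \<Rightarrow> 'a matroid" where
  "contract M C = dual (delete (dual M) C)"

definition minor :: "'a matroid \<Rightarrow> 'a matroid \<Rightarrow> bool" where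
  "minor N M \<longleftrightarrow> (\<exists>C D. C \<subseteq> ground M \<and> D \<subseteq> ground M \<and> C \<inter> D = {} \<and>
                        N = delete (contract M C) D)"

definition iso :: "'a matroid \<Rightarrow> 'b matroid \<Rightarrow> bool" where
  "iso M N \<longleftrightarrow> (\<exists>f. bij_betw f (ground M) (ground N) \<and>
                  (\<forall>X. X \<subseteq> ground M \<longrightarrow> (X \<in> indep M \<longleftrightarrow> f ` X \<in> indep N)))"

definition dsum :: "'a matroid \<Rightarrow> 'b matroid \<Rightarrow> ('a + 'b) matroid" where
  "dsum M N = (Inl ` ground M \<union> Inr ` ground N,
               {Inl ` I \<union> Inr ` J | I J. I \<in> indep M \<and> J \<in> indep N})"

definition U :: "nat \<Rightarrow> nat \<Rightarrow> nat matroid" where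
  "U r n = ({0..<n}, {X. X \<subseteq> {0..<n} \<and> card X \<le> r})"

definition disconnected :: "'a matroid \<Rightarrow> bool" where
  "disconnected M \<longleftrightarrow> (\<exists>X. X \<noteq> {} \<and> X \<subset> ground M \<and>
                          rk M X + rk M (ground M - X) = rk M (ground M))"

definition paving :: "'a matroid \<Rightarrow> bool" where
  "paving M \<longleftrightarrow> (\<forall>C. circuit M C \<longrightarrow> card C \<ge> rk M (ground M))"

definition sparse_paving :: "'a matroid \<Rightarrow> bool" where
  "sparse_paving M \<longleftrightarrow> paving M \<and> paving (dual M)"

definition two_two_uniform :: "'a matroid \<Rightarrow> bool" where
  "two_two_uniform M \<longleftrightarrow> \<not> (\<exists>N. minor N M \<and> iso N (dsum (U 2 2) (U 0 2)))"

end

(*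
  (2,2)-uniformity is a rank condition: M has no U(2,2) + U(0,2) minor iff every set S with
  r(S) <= r(M) - 2 has nullity |S| - r(S) <= 1.  Indeed such a minor is obtained by contracting a
  basis I of a set S of nullity 2, keeping two elements of S - I (which become loops) and two
  further elements of a basis extending I (which stay independent).

  Paving matroids satisfy the condition, because low-rank sets are independent, and so do duals of
  paving matroids, because every non-spanning set has nullity at most 1.  The condition also
  survives adding a loop to a paving matroid, a coloop to the dual of a paving matroid, and a
  rank-1 pair U(1,2) to a sparse paving matroid.

  Conversely let M be disconnected, satisfy the condition and be neither paving nor dual to a
  paving matroid.  A loop or coloop splits off as U(0,1) or U(1,1), and the condition applied to
  the remaining matroid shows it is paving resp. dual paving.  Otherwise every nonempty separator
  is dependent.  If both sides of a separation had rank at least 2, the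
  condition would give |E| = r(M) + 2 and M would be dual paving; if both had rank 1, then
  r(M) = 2 and M would be paving.  So one side is a rank-1 pair, which splits off as U(1,2) and
  leaves a sparse paving matroid.
*)
theory Submission
  imports Defs
begin

section \<open>Rank\<close>

lemma rk_eqI:
  assumes le: "\<And>I. I \<in> indep N \<Longrightarrow> I \<subseteq> S \<Longrightarrow> card I \<le> k"
    and "I \<in> indep N" "I \<subseteq> S" "card I = k"
  shows "rk N S = k"
  unfolding rk_def
proof (rule Max_eqI)
  have "card ` {I \<in> indep N. I \<subseteq> S} \<subseteq> {..k}" using le by auto
  then show "finite (card ` {I \<in> indep N. I \<subseteq> S})"
    using finite_subset by blast
  show "k \<in> card ` {I \<in> indep N. I \<subseteq> S}" using assms(2-4) by blast
  fix y assume "y \<in> card ` {I \<in> indep N. I \<subseteq> S}"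
  then show "y \<le> k" using le by blast
qed

lemma ground_delete: "ground (delete M D) = ground M - D"
  by (simp add: delete_def ground_def)

lemma indep_delete: "indep (delete M D) = {I \<in> indep M. I \<inter> D = {}}"
  by (simp add: delete_def indep_def)

lemma matroid_eqI: "ground M = ground N \<Longrightarrow> indep M = indep N \<Longrightarrow> M = N"
  by (simp add: ground_def indep_def prod_eq_iff)

locale wf_matroid =
  fixes M :: "'a matroid"
  assumes matroid: "matroid M"
begin

abbreviation "E \<equiv> ground M"
abbreviation "r \<equiv> rk M"

lemma finite_ground: "finite E"
  using matroid by (simp add: matroid_def)

lemma indep_subset_ground: "I \<in> indep M \<Longrightarrow> I \<subseteq> E"
  using matroid by (simp add: matroid_def)

lemma empty_indep: "{} \<in> indep M"
  using matroid by (simp add: matroid_def)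

lemma indep_subset: "Y \<in> indep M \<Longrightarrow> X \<subseteq> Y \<Longrightarrow> X \<in> indep M"
  using matroid by (simp add: matroid_def)

lemma indep_augment:
  "X \<in> indep M \<Longrightarrow> Y \<in> indep M \<Longrightarrow> card X < card Y \<Longrightarrow> \<exists>y\<in>Y - X. insert y X \<in> indep M"
  using matroid unfolding matroid_def by blast

lemma indep_finite: "I \<in> indep M \<Longrightarrow> finite I"
  using indep_subset_ground finite_ground finite_subset by blast

lemma finite_subset_ground: "S \<subseteq> E \<Longrightarrow> finite S"
  using finite_ground finite_subset by blast

lemma finite_indep_in: "finite {I \<in> indep M. I \<subseteq> S}"
  by (rule finite_subset[of _ "Pow E"]) (auto dest: indep_subset_ground simp: finite_ground)

lemma card_le_rk: "I \<in> indep M \<Longrightarrow> I \<subseteq> S \<Longrightarrow> card I \<le> r S"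
  unfolding rk_def using finite_indep_in by (intro Max_ge) auto

lemma obtain_indep_card_rk:
  obtains I where "I \<in> indep M" "I \<subseteq> S" "card I = r S"
proof -
  have "r S \<in> card ` {I \<in> indep M. I \<subseteq> S}"
    unfolding rk_def using finite_indep_in empty_indep by (intro Max_in) auto
  then show ?thesis using that by auto
qed

lemma indep_extend_card_rk:
  assumes "J \<in> indep M" "J \<subseteq> S"
  obtains K where "K \<in> indep M" "J \<subseteq> K" "K \<subseteq> S" "card K = r S"
proof -
  let ?F = "{K \<in> indep M. K \<subseteq> S}"
  obtain K where K: "K \<in> ?F" "J \<subseteq> K" and K_max: "\<And>K'. K' \<in> ?F \<Longrightarrow> K \<subseteq> K' \<Longrightarrow> K = K'"
    using finite_has_maximal2[OF finite_indep_in, of J S] assms by auto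
  obtain I where I: "I \<in> indep M" "I \<subseteq> S" "card I = r S"
    using obtain_indep_card_rk .
  have "\<not> card K < r S"
  proof
    assume "card K < r S"
    then obtain y where "y \<in> I - K" "insert y K \<in> indep M"
      using indep_augment[of K I] K(1) I by auto
    then show False using K_max[of "insert y K"] K(1) I(2) by auto
  qed
  moreover have "card K \<le> r S" using K(1) card_le_rk by auto
  ultimately show ?thesis using that K by auto
qed

lemma rk_mono: "r A \<le> r B" if "A \<subseteq> B"
proof -
  obtain I where "I \<in> indep M" "I \<subseteq> A" "card I = r A" using obtain_indep_card_rk .
  then show "r A \<le> r B" using card_le_rk[of I B] that by auto
qed

lemma rk_le_card: "r S \<le> card S" if "finite S"
proof -
  obtain I where "I \<subseteq> S" "card I = r S" using obtain_indep_card_rk .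
  then show ?thesis using card_mono that by metis
qed

lemma rk_le_rk_ground: "r S \<le> r E"
proof -
  obtain I where "I \<in> indep M" "I \<subseteq> S" "card I = r S" using obtain_indep_card_rk .
  then show ?thesis using card_le_rk[of I E] indep_subset_ground by auto
qed

lemma rk_empty: "r {} = 0"
  using rk_le_card[of "{}"] by simp

lemma rk_indep: "I \<in> indep M \<Longrightarrow> r I = card I"
  using card_le_rk[of I I] rk_le_card[of I] indep_finite by fastforce

lemma indep_iff_rk_eq_card:
  assumes "I \<subseteq> E" shows "I \<in> indep M \<longleftrightarrow> r I = card I"
proof
  assume "r I = card I"
  moreover obtain J where "J \<in> indep M" "J \<subseteq> I" "card J = r I"
    using obtain_indep_card_rk .
  ultimately show "I \<in> indep M"
    using card_subset_eq[OF finite_subset_ground[OF assms]] by metis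
qed (rule rk_indep)

lemma rk_insert_le: "r (insert x S) \<le> r S + 1"
proof -
  obtain I where I: "I \<in> indep M" "I \<subseteq> insert x S" "card I = r (insert x S)"
    using obtain_indep_card_rk .
  have "card (I - {x}) \<le> r S"
    using I by (intro card_le_rk) (auto intro: indep_subset)
  moreover have "card I \<le> card (I - {x}) + 1"
    using I indep_finite by (cases "x \<in> I") (auto simp: card_Diff_singleton_if)
  ultimately show ?thesis using I by simp
qed

lemma rk_union_le_card: "finite B \<Longrightarrow> r (A \<union> B) \<le> r A + card B"
proof (induction B rule: finite_induct)
  case (insert x F)
  then show ?case using rk_insert_le[of x "A \<union> F"] by simp
qed simp

lemma rk_submod: "r (A \<union> B) + r (A \<inter> B) \<le> r A + r B"
proof -
  obtain I where I: "I \<in> indep M" "I \<subseteq> A \<inter> B" "card I = r (A \<inter> B)"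
    using obtain_indep_card_rk .
  obtain J where J: "J \<in> indep M" "I \<subseteq> J" "J \<subseteq> A \<union> B" "card J = r (A \<union> B)"
    using indep_extend_card_rk[of I "A \<union> B"] I by blast
  have "card (J \<inter> A \<inter> B) \<le> card I"
    using card_le_rk[of "J \<inter> A \<inter> B" "A \<inter> B"] J I by (auto intro: indep_subset)
  then have "J \<inter> A \<inter> B = I"
    using I J indep_finite[OF J(1)] by (intro card_seteq[symmetric]) auto
  moreover have "(J \<inter> A) \<union> (J \<inter> B) = J" using J(3) by blast
  ultimately have "card J + card I = card (J \<inter> A) + card (J \<inter> B)"
    using card_Un_Int[of "J \<inter> A" "J \<inter> B"] indep_finite[OF J(1)] by (simp add: Int_ac)
  moreover have "card (J \<inter> A) \<le> r A" "card (J \<inter> B) \<le> r B"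
    using J(1) by (auto intro: card_le_rk indep_subset)
  ultimately show ?thesis using I J by linarith
qed

lemma rk_union_le: "r (A \<union> B) \<le> r A + r B"
  using rk_submod[of A B] by linarith

section \<open>Duality, deletion and contraction\<close>

lemma ground_dual: "ground (dual M) = E"
  by (simp add: dual_def ground_def)

lemma basis_iff: "basis M B \<longleftrightarrow> B \<in> indep M \<and> card B = r E"
proof
  assume B: "basis M B"
  then have "B \<in> indep M" by (simp add: basis_def)
  moreover obtain K where "K \<in> indep M" "B \<subseteq> K" "K \<subseteq> E" "card K = r E"
    using indep_extend_card_rk[OF \<open>B \<in> indep M\<close> indep_subset_ground[OF \<open>B \<in> indep M\<close>]] by blast
  ultimately show "B \<in> indep M \<and> card B = r E"
    using B unfolding basis_def by auto
next
  assume "B \<in> indep M \<and> card B = r E"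
  then show "basis M B"
    unfolding basis_def
    by (metis card_le_rk card_seteq indep_finite indep_subset_ground)
qed

lemma indep_dual: "indep (dual M) = {X. X \<subseteq> E \<and> r (E - X) = r E}"
proof (intro set_eqI iffI; clarsimp)
  fix X assume "X \<in> indep (dual M)"
  then obtain B where B: "X \<subseteq> E" "B \<in> indep M" "card B = r E" "X \<inter> B = {}"
    by (auto simp: dual_def indep_def ground_def basis_iff)
  then have "r E \<le> r (E - X)"
    using card_le_rk[of B "E - X"] indep_subset_ground by auto
  then show "X \<subseteq> E \<and> r (E - X) = r E"
    using B(1) rk_le_rk_ground[of "E - X"] by auto
next
  fix X assume X: "X \<subseteq> E" "r (E - X) = r E"
  obtain B where "B \<in> indep M" "B \<subseteq> E - X" "card B = r (E - X)"
    using obtain_indep_card_rk .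
  then show "X \<in> indep (dual M)"
    using X by (auto simp: dual_def indep_def ground_def basis_iff)
qed

lemma rk_dual:
  assumes A: "A \<subseteq> E"
  shows "rk (dual M) A + r E = card A + r (E - A)"
proof -
  have finA: "finite A" using A finite_subset_ground by blast
  obtain J where J: "J \<in> indep M" "J \<subseteq> E - A" "card J = r (E - A)"
    using obtain_indep_card_rk .
  obtain B where B: "B \<in> indep M" "J \<subseteq> B" "B \<subseteq> E" "card B = r E"
    using indep_extend_card_rk[OF J(1)] J(2) by blast
  have card_B_out: "card (B - A) = r (E - A)"
    using card_le_rk[of "B - A" "E - A"] card_mono[of "B - A" J] J B indep_finite
    by (force intro: indep_subset)
  moreover have card_B: "card B = card (B \<inter> A) + card (B - A)"
    using card_Int_Diff indep_finite[OF B(1)] by blast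
  moreover have card_A: "card A = card (A \<inter> B) + card (A - B)"
    using card_Int_Diff finA by blast
  moreover have "rk (dual M) A = card (A - B)"
  proof (rule rk_eqI)
    have "B \<subseteq> E - (A - B)" using B(3) by blast
    then have "r E \<le> r (E - (A - B))" using card_le_rk[OF B(1)] B(4) by simp
    then show "A - B \<in> indep (dual M)"
      using rk_le_rk_ground[of "E - (A - B)"] A by (simp add: indep_dual subset_iff)
    fix X assume "X \<in> indep (dual M)" "X \<subseteq> A"
    then have X: "X \<subseteq> A" "r (E - X) = r E" by (auto simp: indep_dual)
    have "E - X = (E - A) \<union> (A - X)" using X(1) A by auto
    then have "r E \<le> r (E - A) + card (A - X)"
      using rk_union_le_card[of "A - X" "E - A"] finA X(2) by auto
    moreover have "card (A - X) = card A - card X" "card X \<le> card A"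
      using X(1) finA by (auto intro: card_Diff_subset finite_subset card_mono)
    ultimately show "card X \<le> card (A - B)"
      using card_B card_A card_B_out B(4) by (simp add: Int_commute)
  qed auto
  ultimately show ?thesis using B(4) by (simp add: Int_commute)
qed

lemma rk_dual_ground: "rk (dual M) E + r E = card E"
  using rk_dual[of E] rk_empty by simp

lemma dual_indep_augment:
  assumes X: "X \<subseteq> E" "r (E - X) = r E" and Y: "Y \<subseteq> E" "r (E - Y) = r E"
    and card_lt: "card X < card Y"
  shows "\<exists>y\<in>Y - X. r (E - insert y X) = r E"
proof (rule ccontr)
  \<comment> \<open>Extending a basis of \<open>E - (X \<union> Y)\<close> to one of \<open>E - X\<close> would have to use all of
    \<open>Y - X\<close>; comparing with \<open>E - Y\<close> then contradicts \<open>card X < card Y\<close>.\<close>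
  assume no_y: "\<not> ?thesis"
  have drop: "r (E - X - {y}) < r E" if "y \<in> Y - X" for y
  proof -
    have "E - X - {y} = E - insert y X" by blast
    then show ?thesis
      using no_y that rk_le_rk_ground[of "E - insert y X"] by (simp add: le_less)
  qed
  let ?Z = "E - (X \<union> Y)"
  obtain J where J: "J \<in> indep M" "J \<subseteq> ?Z" "card J = r ?Z"
    using obtain_indep_card_rk .
  obtain K where K: "K \<in> indep M" "J \<subseteq> K" "K \<subseteq> E - X" "card K = r E"
    using indep_extend_card_rk[OF J(1), of "E - X"] J(2) X(2) by auto
  have "Y - X \<subseteq> K"
  proof
    fix y assume y: "y \<in> Y - X"
    show "y \<in> K"
    proof (rule ccontr)
      assume "y \<notin> K"
      then have "card K \<le> r (E - X - {y})" using K by (intro card_le_rk) auto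
      then show False using drop[OF y] K(4) by simp
    qed
  qed
  then have "J \<union> (Y - X) \<subseteq> K" using K(2) by blast
  moreover have "J \<inter> (Y - X) = {}" using J(2) by blast
  ultimately have "card J + card (Y - X) \<le> card K"
    using indep_finite[OF K(1)] card_mono card_Un_disjoint finite_subset by (metis Un_subset_iff)
  moreover have "E - Y = ?Z \<union> (X - Y)" using X(1) by blast
  then have "r E \<le> r ?Z + card (X - Y)"
    using rk_union_le_card[of "X - Y" ?Z] Y(2) finite_subset_ground X(1) by auto
  moreover have "card (X - Y) < card (Y - X)"
    using card_lt card_Int_Diff[of X Y] card_Int_Diff[of Y X] X(1) Y(1) finite_subset_ground
    by (simp add: Int_commute)
  ultimately show False using J(3) K(4) by linarith
qed

lemma matroid_dual: "matroid (dual M)"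
  unfolding matroid_def ground_dual indep_dual mem_Collect_eq
proof (intro conjI allI impI ballI)
  fix X Y assume "Y \<subseteq> E \<and> r (E - Y) = r E" "X \<subseteq> Y"
  then show "r (E - X) = r E"
    using rk_mono[of "E - Y" "E - X"] rk_le_rk_ground[of "E - X"] by (auto simp: Diff_mono)
next
  fix X Y assume "X \<subseteq> E \<and> r (E - X) = r E" "Y \<subseteq> E \<and> r (E - Y) = r E" "card X < card Y"
  then show "\<exists>y\<in>Y - X. insert y X \<subseteq> E \<and> r (E - insert y X) = r E"
    using dual_indep_augment[of X Y] by blast
qed (use finite_ground in auto)

lemma dual_dual: "dual (dual M) = M"
proof (rule matroid_eqI)
  interpret dual: wf_matroid "dual M" by unfold_locales (rule matroid_dual)
  show "ground (dual (dual M)) = E" by (simp add: dual.ground_dual ground_dual)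
  show "indep (dual (dual M)) = indep M"
  proof (intro set_eqI)
    fix X
    show "X \<in> indep (dual (dual M)) \<longleftrightarrow> X \<in> indep M"
    proof (cases "X \<subseteq> E")
      case True
      then have "E - (E - X) = X" "card (E - X) + card X = card E"
        using card_Diff_subset[OF finite_subset_ground True] card_mono[OF finite_ground True]
        by auto
      then have "rk (dual M) (E - X) = rk (dual M) E \<longleftrightarrow> r X = card X"
        using rk_dual[of "E - X"] rk_dual_ground by auto
      then show ?thesis
        using True by (simp add: dual.indep_dual ground_dual indep_iff_rk_eq_card)
    next
      case False
      then show ?thesis using indep_subset_ground by (auto simp: dual.indep_dual ground_dual)
    qed
  qed
qed

lemma matroid_delete: "matroid (delete M D)"
  unfolding matroid_def ground_delete indep_delete mem_Collect_eq
proof (intro conjI allI impI ballI)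
  fix X Y assume "X \<in> indep M \<and> X \<inter> D = {}" "Y \<in> indep M \<and> Y \<inter> D = {}" "card X < card Y"
  then show "\<exists>y\<in>Y - X. insert y X \<in> indep M \<and> insert y X \<inter> D = {}"
    using indep_augment[of X Y] by auto
qed (auto simp: finite_ground empty_indep dest: indep_subset_ground intro: indep_subset)

lemma rk_delete: "rk (delete M D) S = r (S - D)"
proof -
  have "{I \<in> indep (delete M D). I \<subseteq> S} = {I \<in> indep M. I \<subseteq> S - D}"
    unfolding indep_delete by auto
  then show ?thesis unfolding rk_def by simp
qed

lemma ground_contract: "ground (contract M C) = E - C"
  by (simp add: contract_def dual_def delete_def ground_def)

lemma indep_contract_iff_rk:
  assumes C: "C \<subseteq> E" and Y: "Y \<subseteq> E - C"
  shows "Y \<in> indep (contract M C) \<longleftrightarrow> r (Y \<union> C) = card Y + r C"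
proof -
  interpret dual: wf_matroid "dual M" by unfold_locales (rule matroid_dual)
  interpret N: wf_matroid "delete (dual M) C" by unfold_locales (rule dual.matroid_delete)
  have "Y \<in> indep (contract M C) \<longleftrightarrow> rk (dual M) (E - C - Y) = rk (dual M) (E - C)"
    using Y by (simp add: contract_def N.indep_dual ground_delete ground_dual dual.rk_delete
        Diff_eq Int_ac)
  moreover have "E - (E - C - Y) = Y \<union> C" "E - (E - C) = C" using C Y by auto
  then have "rk (dual M) (E - C - Y) + r E = card (E - C - Y) + r (Y \<union> C)"
    and "rk (dual M) (E - C) + r E = card (E - C) + r C"
    using rk_dual[of "E - C - Y"] rk_dual[of "E - C"] by auto
  moreover have "card (E - C) = card (E - C - Y) + card Y"
    using Y finite_ground
    by (metis card_Diff_subset card_mono finite_Diff finite_subset le_add_diff_inverse2)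
  ultimately show ?thesis by linarith
qed

lemma indep_contract_iff:
  assumes I: "I \<in> indep M" and Y: "Y \<subseteq> E - I"
  shows "Y \<in> indep (contract M I) \<longleftrightarrow> Y \<union> I \<in> indep M"
proof -
  have "Y \<union> I \<subseteq> E" using Y indep_subset_ground[OF I] by blast
  moreover have "card (Y \<union> I) = card Y + card I"
    using Y indep_finite[OF I] finite_subset_ground by (intro card_Un_disjoint) auto
  ultimately show ?thesis
    using indep_contract_iff_rk[OF indep_subset_ground[OF I] Y] indep_iff_rk_eq_card[of "Y \<union> I"]
      rk_indep[OF I] by (simp add: Un_commute)
qed

section \<open>Paving matroids\<close>

lemma paving_iff: "paving M \<longleftrightarrow> (\<forall>S\<subseteq>E. card S < r E \<longrightarrow> r S = card S)"
proof
  assume paving: "paving M"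
  show "\<forall>S\<subseteq>E. card S < r E \<longrightarrow> r S = card S"
  proof (intro allI impI)
    fix S assume S: "S \<subseteq> E" "card S < r E"
    show "r S = card S"
    proof (rule ccontr)
      assume "r S \<noteq> card S"
      let ?dep = "{D. D \<subseteq> S \<and> D \<notin> indep M}"
      have "S \<in> ?dep" using \<open>r S \<noteq> card S\<close> rk_indep by auto
      moreover have "finite ?dep"
        using finite_subset_ground[OF S(1)] by simp
      ultimately obtain D where "D \<in> ?dep" and D_min: "\<forall>D'\<in>?dep. D' \<subseteq> D \<longrightarrow> D = D'"
        by (meson finite_has_minimal2)
      then have D: "D \<subseteq> S" "D \<notin> indep M" by auto
      have "circuit M D"
        unfolding circuit_def
      proof (intro conjI ballI)
        fix x assume "x \<in> D"
        then show "D - {x} \<in> indep M" using D_min D(1) by blast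
      qed (use D S(1) in auto)
      then have "r E \<le> card D" using paving by (simp add: paving_def)
      moreover have "card D \<le> card S"
        using D(1) finite_subset_ground[OF S(1)] by (rule card_mono[rotated])
      ultimately show False using S(2) by linarith
    qed
  qed
next
  assume small_indep: "\<forall>S\<subseteq>E. card S < r E \<longrightarrow> r S = card S"
  show "paving M"
    unfolding paving_def circuit_def
    using small_indep indep_iff_rk_eq_card by (meson not_le)
qed

lemma paving_dual_iff: "paving (dual M) \<longleftrightarrow> (\<forall>S\<subseteq>E. r E < card S \<longrightarrow> r S = r E)"
proof -
  interpret dual: wf_matroid "dual M" by unfold_locales (rule matroid_dual)
  have complement: "card X < rk (dual M) E \<longleftrightarrow> r E < card (E - X)"
    "rk (dual M) X = card X \<longleftrightarrow> r (E - X) = r E" if "X \<subseteq> E" for X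
    using rk_dual[OF that] rk_dual_ground card_Diff_subset[OF finite_subset_ground[OF that] that]
      card_mono[OF finite_ground that] by auto
  have "paving (dual M) \<longleftrightarrow> (\<forall>X\<subseteq>E. r E < card (E - X) \<longrightarrow> r (E - X) = r E)"
    using complement by (auto simp: dual.paving_iff ground_dual)
  also have "\<dots> \<longleftrightarrow> (\<forall>S\<subseteq>E. r E < card S \<longrightarrow> r S = r E)"
    by (metis Diff_subset double_diff order_refl)
  finally show ?thesis .
qed

lemma paving_low_rank_rk_eq_card:
  assumes "paving M" "S \<subseteq> E" "r S + 2 \<le> r E"
  shows "r S = card S"
proof (rule ccontr)
  assume "r S \<noteq> card S"
  then have "r S + 1 \<le> card S" using rk_le_card[OF finite_subset_ground[OF assms(2)]] by linarith
  then obtain T where T: "T \<subseteq> S" "card T = r S + 1"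
    by (rule obtain_subset_with_card_n)
  then have "r T = card T"
    using assms by (auto simp: paving_iff)
  then show False using rk_mono[OF T(1)] T(2) by linarith
qed

lemma dual_paving_nonspanning_nullity_le_1:
  assumes "paving (dual M)" "S \<subseteq> E" "r S < r E"
  shows "card S \<le> r S + 1"
proof (rule ccontr)
  assume "\<not> card S \<le> r S + 1"
  have "r E \<le> r S + card (E - S)"
    using rk_union_le_card[of "E - S" S] finite_ground assms(2) by (simp add: Un_absorb1)
  then have "r E - r S - 1 \<le> card (E - S)" by linarith
  then obtain T where T: "T \<subseteq> E - S" "card T = r E - r S - 1"
    by (rule obtain_subset_with_card_n)
  have "card (S \<union> T) = card S + card T"
    using T(1) assms(2) finite_subset_ground by (intro card_Un_disjoint) auto
  moreover have "S \<union> T \<subseteq> E" using assms(2) T(1) by blast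
  ultimately have "r (S \<union> T) = r E"
    using assms(1,3) T(2) \<open>\<not> card S \<le> r S + 1\<close> by (simp add: paving_dual_iff)
  moreover have "r (S \<union> T) \<le> r S + card T"
    using rk_union_le_card[of T S] T(1) finite_ground finite_subset by blast
  ultimately show False using T(2) assms(3) by linarith
qed

end

section \<open>A rank condition equivalent to (2,2)-uniformity\<close>

definition low_rank_nullity_le_1 :: "'a matroid \<Rightarrow> bool" where
  "low_rank_nullity_le_1 M \<longleftrightarrow>
     (\<forall>S\<subseteq>ground M. rk M S + 2 \<le> rk M (ground M) \<longrightarrow> card S \<le> rk M S + 1)"

lemma ground_U: "ground (U k n) = {0..<n}"
  by (simp add: U_def ground_def)

lemma indep_U: "indep (U k n) = {X. X \<subseteq> {0..<n} \<and> card X \<le> k}"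
  by (simp add: U_def indep_def)

lemma ground_dsum: "ground (dsum A B) = Inl ` ground A \<union> Inr ` ground B"
  by (simp add: dsum_def ground_def)

lemma indep_dsum: "indep (dsum A B) = {Inl ` I \<union> Inr ` J | I J. I \<in> indep A \<and> J \<in> indep B}"
  by (simp add: dsum_def indep_def)

lemma ground_U22_dsum_U02: "ground (dsum (U 2 2) (U 0 2)) = {Inl 0, Inl 1, Inr 0, Inr 1}"
  by (auto simp: ground_dsum ground_U)

lemma indep_U22_dsum_U02: "indep (dsum (U 2 2) (U 0 2)) = Pow {Inl 0, Inl 1}"
proof -
  have "indep (U 0 2) = {{}}" by (auto simp: indep_U card_eq_0_iff intro: finite_subset)
  moreover have "card X \<le> 2" if "X \<subseteq> {0, 1::nat}" for X
    using card_mono[OF _ that] by simp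
  then have "indep (U 2 2) = Pow {0, 1}"
    by (auto simp: indep_U)
  ultimately have "indep (dsum (U 2 2) (U 0 2)) = image Inl ` Pow {0, 1}"
    by (auto simp: indep_dsum)
  then show ?thesis by (simp add: image_Pow_surj)
qed

lemma iso_U22_dsum_U02I:
  assumes ground: "ground N = {a, b, c, d}" and distinct: "distinct [a, b, c, d]"
    and indep: "\<And>X. X \<subseteq> ground N \<Longrightarrow> X \<in> indep N \<longleftrightarrow> X \<subseteq> {a, b}"
  shows "iso N (dsum (U 2 2) (U 0 2))"
proof -
  define f :: "'a \<Rightarrow> nat + nat"
    where "f x = (if x = a then Inl 0 else if x = b then Inl 1 else if x = c then Inr 0 else Inr 1)"
    for x
  have f_abcd: "f a = Inl 0" "f b = Inl 1" "f c = Inr 0" "f d = Inr 1"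
    using distinct by (auto simp: f_def)
  have "bij_betw f (ground N) (ground (dsum (U 2 2) (U 0 2)))"
    unfolding ground ground_U22_dsum_U02 bij_betw_def inj_on_def using f_abcd distinct by auto
  moreover have f_Inl: "f x \<in> {Inl 0, Inl 1} \<longleftrightarrow> x \<in> {a, b}" if "x \<in> ground N" for x
    using that ground f_abcd by auto
  have "X \<subseteq> {a, b} \<longleftrightarrow> f ` X \<in> indep (dsum (U 2 2) (U 0 2))" if "X \<subseteq> ground N" for X
    unfolding indep_U22_dsum_U02 Pow_iff image_subset_iff using f_Inl that
    by (auto simp: subset_iff)
  ultimately show ?thesis unfolding iso_def using indep by auto
qed

lemma iso_U22_dsum_U02E:
  assumes "iso N (dsum (U 2 2) (U 0 2))"
  obtains a b c d where "{a, b, c, d} \<subseteq> ground N" "a \<noteq> b" "c \<noteq> d"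
    "{a, b} \<in> indep N" "{c} \<notin> indep N" "{d} \<notin> indep N"
proof -
  obtain f :: "'a \<Rightarrow> nat + nat" where f: "bij_betw f (ground N) {Inl 0, Inl 1, Inr 0, Inr 1}"
    and f_indep: "\<And>X. X \<subseteq> ground N \<Longrightarrow> X \<in> indep N \<longleftrightarrow> f ` X \<subseteq> {Inl 0, Inl 1}"
    using assms unfolding iso_def ground_U22_dsum_U02 indep_U22_dsum_U02 Pow_iff by blast
  have preimage: "inv_into (ground N) f y \<in> ground N \<and> f (inv_into (ground N) f y) = y"
    if "y \<in> {Inl 0, Inl 1, Inr 0, Inr 1}" for y
    using that bij_betw_inv_into_right[OF f] bij_betw_imp_surj_on[OF f] inv_into_into by metis
  obtain a b c d where "{a, b, c, d} \<subseteq> ground N"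
    and f_abcd: "f a = Inl 0" "f b = Inl 1" "f c = Inr 0" "f d = Inr 1"
    using preimage[of "Inl 0"] preimage[of "Inl 1"] preimage[of "Inr 0"] preimage[of "Inr 1"]
    by auto
  moreover from this have "{a, b} \<in> indep N" "{c} \<notin> indep N" "{d} \<notin> indep N"
    using f_indep[of "{a, b}"] f_indep[of "{c}"] f_indep[of "{d}"] by auto
  ultimately show ?thesis using that f_abcd by fastforce
qed

context wf_matroid
begin

lemma low_rank_nullity_le_1_if_paving_or_dual_paving:
  assumes "paving M \<or> paving (dual M)"
  shows "low_rank_nullity_le_1 M"
  unfolding low_rank_nullity_le_1_def
proof (intro allI impI)
  fix S assume "S \<subseteq> E" "r S + 2 \<le> r E"
  then show "card S \<le> r S + 1"
    using assms paving_low_rank_rk_eq_card dual_paving_nonspanning_nullity_le_1 by fastforce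
qed

lemma indep_contract_delete_iff_rk:
  assumes "C \<subseteq> E" "X \<subseteq> E - C - D"
  shows "X \<in> indep (delete (contract M C) D) \<longleftrightarrow> r (X \<union> C) = card X + r C"
  using indep_contract_iff_rk[OF assms(1), of X] assms(2) by (auto simp: indep_delete)

lemma not_low_rank_nullity_le_1_if_minor_U22_dsum_U02:
  assumes "minor N M" "iso N (dsum (U 2 2) (U 0 2))"
  shows "\<not> low_rank_nullity_le_1 M"
proof
  assume low_rank: "low_rank_nullity_le_1 M"
  obtain C D where C: "C \<subseteq> E" and N: "N = delete (contract M C) D"
    using assms(1) unfolding minor_def by blast
  have ground_N: "ground N = E - C - D" by (simp add: N ground_delete ground_contract)
  have indep_N: "X \<in> indep N \<longleftrightarrow> r (X \<union> C) = card X + r C" if "X \<subseteq> ground N" for X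
    using indep_contract_delete_iff_rk[OF C, of X D] that[unfolded ground_N] N by simp
  obtain a b c d where abcd: "{a, b, c, d} \<subseteq> ground N" "a \<noteq> b" "c \<noteq> d"
    and indep: "{a, b} \<in> indep N" "{c} \<notin> indep N" "{d} \<notin> indep N"
    using iso_U22_dsum_U02E[OF assms(2)] by blast
  then have "r ({a, b} \<union> C) = r C + 2" using indep_N[of "{a, b}"] by simp
  then have "r C + 2 \<le> r E" using rk_le_rk_ground[of "{a, b} \<union> C"] by simp
  have "r (insert x C) = r C" if "x \<in> {c, d}" for x
  proof -
    have "r ({x} \<union> C) \<noteq> card {x} + r C" using indep_N[of "{x}"] abcd indep that by auto
    then show ?thesis using rk_insert_le[of x C] rk_mono[of C "insert x C"] by force
  qed
  moreover have "c \<notin> C" "d \<notin> C" using abcd(1) by (auto simp: ground_N)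
  ultimately have "r (insert c (insert d C)) \<le> r C"
    using rk_submod[of "insert c C" "insert d C"] abcd(3) by (simp add: insert_commute)
  moreover have "insert c (insert d C) \<subseteq> E" using abcd C by (auto simp: ground_N)
  ultimately have "card (insert c (insert d C)) \<le> r C + 1"
    using low_rank \<open>r C + 2 \<le> r E\<close> unfolding low_rank_nullity_le_1_def
    by (meson add_le_mono1 le_trans)
  moreover have "card (insert c (insert d C)) = card C + 2"
    using \<open>c \<notin> C\<close> \<open>d \<notin> C\<close> abcd(3) finite_subset_ground[OF C] by simp
  ultimately show False using rk_le_card[OF finite_subset_ground[OF C]] by linarith
qed

lemma minor_U22_dsum_U02I:
  assumes B: "B \<in> indep M" "I \<subseteq> B" and ab: "a \<in> B - I" "b \<in> B - I" "a \<noteq> b"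
    and cd: "c \<in> E - I" "d \<in> E - I" "c \<noteq> d" "insert c I \<notin> indep M" "insert d I \<notin> indep M"
  shows "\<exists>N. minor N M \<and> iso N (dsum (U 2 2) (U 0 2))"
proof -
  \<comment> \<open>In \<open>M / I\<close> the elements \<open>c\<close>, \<open>d\<close> are loops while \<open>{a, b}\<close> stays independent.\<close>
  have indep_iff: "X \<union> I \<in> indep M \<longleftrightarrow> c \<notin> X \<and> d \<notin> X" if "X \<subseteq> {a, b, c, d}" for X
  proof
    assume "X \<union> I \<in> indep M"
    then show "c \<notin> X \<and> d \<notin> X" using cd(4,5) indep_subset by blast
  next
    assume "c \<notin> X \<and> d \<notin> X"
    then have "X \<union> I \<subseteq> B" using that ab B(2) by auto
    then show "X \<union> I \<in> indep M" using B(1) indep_subset by blast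
  qed
  moreover have "{a} \<union> I \<in> indep M" "{b} \<union> I \<in> indep M"
    using ab B(1,2) indep_subset[OF B(1)] by auto
  ultimately have "a \<notin> {c, d}" "b \<notin> {c, d}"
    using indep_iff[of "{a}"] indep_iff[of "{b}"] by auto
  define N where "N = delete (contract M I) (E - I - {a, b, c, d})"
  have abcd_E: "{a, b, c, d} \<subseteq> E - I" using ab cd indep_subset_ground[OF B(1)] by auto
  then have ground_N: "ground N = {a, b, c, d}"
    by (auto simp: N_def ground_delete ground_contract)
  have "minor N M"
    unfolding minor_def N_def using indep_subset_ground[OF indep_subset[OF B]]
    by (intro exI[of _ I] exI[of _ "E - I - {a, b, c, d}"]) auto
  moreover have "iso N (dsum (U 2 2) (U 0 2))"
  proof (rule iso_U22_dsum_U02I[OF ground_N])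
    show "distinct [a, b, c, d]" using ab(3) cd(3) \<open>a \<notin> {c, d}\<close> \<open>b \<notin> {c, d}\<close> by auto
    fix X assume "X \<subseteq> ground N"
    then have X: "X \<subseteq> {a, b, c, d}" using ground_N by simp
    then have "X \<in> indep N \<longleftrightarrow> X \<in> indep (contract M I)" by (auto simp: N_def indep_delete)
    also have "\<dots> \<longleftrightarrow> c \<notin> X \<and> d \<notin> X"
      using indep_contract_iff[OF indep_subset[OF B] subset_trans[OF X abcd_E]] indep_iff[OF X]
      by simp
    finally show "X \<in> indep N \<longleftrightarrow> X \<subseteq> {a, b}"
      using X \<open>a \<notin> {c, d}\<close> \<open>b \<notin> {c, d}\<close> by auto
  qed
  ultimately show ?thesis by blast
qed

lemma minor_U22_dsum_U02_if_low_rank_nullity_ge_2: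
  assumes S: "S \<subseteq> E" "r S + 2 \<le> r E" "r S + 1 < card S"
  shows "\<exists>N. minor N M \<and> iso N (dsum (U 2 2) (U 0 2))"
proof -
  obtain I where I: "I \<in> indep M" "I \<subseteq> S" "card I = r S"
    using obtain_indep_card_rk .
  obtain B where B: "B \<in> indep M" "I \<subseteq> B" "B \<subseteq> E" "card B = r E"
    using indep_extend_card_rk[OF I(1) indep_subset_ground[OF I(1)]] by blast
  have finite_I: "finite I" using indep_finite[OF I(1)] .
  have "2 \<le> card (S - I)" using card_Diff_subset[OF finite_I I(2)] S I(3) by linarith
  then obtain T where "T \<subseteq> S - I" "card T = 2" by (rule obtain_subset_with_card_n)
  then obtain c d where cd: "c \<in> S - I" "d \<in> S - I" "c \<noteq> d"
    by (auto simp: card_2_iff)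
  have "2 \<le> card (B - I)" using card_Diff_subset[OF finite_I B(2)] S B(4) I(3) by linarith
  then obtain T where "T \<subseteq> B - I" "card T = 2" by (rule obtain_subset_with_card_n)
  then obtain a b where ab: "a \<in> B - I" "b \<in> B - I" "a \<noteq> b"
    by (auto simp: card_2_iff)
  have "insert x I \<notin> indep M" if "x \<in> S - I" for x
    using card_le_rk[of "insert x I" S] that I finite_I by auto
  then show ?thesis
    using minor_U22_dsum_U02I[OF B(1,2) ab] cd S(1) by blast
qed

lemma two_two_uniform_iff_low_rank_nullity_le_1: "two_two_uniform M \<longleftrightarrow> low_rank_nullity_le_1 M"
proof
  assume "two_two_uniform M"
  then show "low_rank_nullity_le_1 M"
    unfolding two_two_uniform_def low_rank_nullity_le_1_def
    using minor_U22_dsum_U02_if_low_rank_nullity_ge_2 by (meson not_le)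
qed (auto simp: two_two_uniform_def dest: not_low_rank_nullity_le_1_if_minor_U22_dsum_U02)

end

section \<open>Splitting off a separator\<close>

definition separator :: "'a matroid \<Rightarrow> 'a set \<Rightarrow> bool" where
  "separator M X \<longleftrightarrow> X \<subseteq> ground M \<and> rk M X + rk M (ground M - X) = rk M (ground M)"

lemma Inl_Inr_image_eq_iff:
  "Inl ` I \<union> Inr ` J = Inl ` I' \<union> Inr ` J' \<longleftrightarrow> I = I' \<and> J = J'"
  by (auto simp: set_eq_iff image_iff)

lemma Inl_Inr_image_subset_iff:
  "Inl ` I \<union> Inr ` J \<subseteq> Inl ` S \<union> Inr ` T \<longleftrightarrow> I \<subseteq> S \<and> J \<subseteq> T"
  by blast

lemma Inl_Inr_image_in_indep_dsum:
  "Inl ` I \<union> Inr ` J \<in> indep (dsum A B) \<longleftrightarrow> I \<in> indep A \<and> J \<in> indep B"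
  by (auto simp: indep_dsum Inl_Inr_image_eq_iff)

context wf_matroid
begin

lemma separator_rk_split:
  assumes "separator M X" "S \<subseteq> E"
  shows "r S = r (S \<inter> X) + r (S - X)"
proof -
  have X: "X \<subseteq> E" using assms(1) by (simp add: separator_def)
  have "X \<union> ((S \<inter> X) \<union> (E - X)) = E" "X \<inter> ((S \<inter> X) \<union> (E - X)) = S \<inter> X"
    using X by auto
  then have "r E + r (S \<inter> X) \<le> r X + r ((S \<inter> X) \<union> (E - X))"
    using rk_submod[of X "(S \<inter> X) \<union> (E - X)"] by simp
  moreover have "S \<union> (E - X) = (S \<inter> X) \<union> (E - X)" "S \<inter> (E - X) = S - X"
    using assms(2) by auto
  then have "r ((S \<inter> X) \<union> (E - X)) + r (S - X) \<le> r S + r (E - X)"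
    using rk_submod[of S "E - X"] by simp
  moreover have "r S \<le> r (S \<inter> X) + r (S - X)"
    using rk_union_le[of "S \<inter> X" "S - X"] by (simp add: Int_Diff_Un)
  ultimately show ?thesis using assms(1) unfolding separator_def by linarith
qed

lemma separator_complement: "separator M X \<Longrightarrow> separator M (E - X)"
  by (auto simp: separator_def double_diff)

lemma indep_iff_separator_parts:
  assumes "separator M Y" "X \<subseteq> E"
  shows "X \<in> indep M \<longleftrightarrow> X \<inter> Y \<in> indep M \<and> X - Y \<in> indep M"
proof -
  have "card X = card (X \<inter> Y) + card (X - Y)"
    using card_Int_Diff finite_subset_ground[OF assms(2)] by blast
  moreover have "r (X \<inter> Y) \<le> card (X \<inter> Y)" "r (X - Y) \<le> card (X - Y)"
    using rk_le_card finite_subset_ground assms(2) by (meson Diff_subset inf_le1 subset_trans)+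
  moreover have "X \<inter> Y \<subseteq> E" "X - Y \<subseteq> E" using assms(2) by auto
  ultimately show ?thesis
    using separator_rk_split[OF assms] indep_iff_rk_eq_card[OF assms(2)]
      indep_iff_rk_eq_card[of "X \<inter> Y"] indep_iff_rk_eq_card[of "X - Y"] by auto
qed

lemma iso_dsum_delete_uniform_separator:
  assumes Y: "separator M Y" and uniform: "\<And>X. X \<subseteq> Y \<Longrightarrow> X \<in> indep M \<longleftrightarrow> card X \<le> k"
  shows "iso M (dsum (delete M Y) (U k (card Y)))"
proof -
  have "Y \<subseteq> E" using Y by (simp add: separator_def)
  then obtain g where g: "bij_betw g Y {0..<card Y}"
    using ex_bij_betw_finite_nat finite_subset_ground by blast
  define f where "f x = (if x \<in> Y then Inr (g x) else Inl x)" for x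
  have f_image: "f ` X = Inl ` (X - Y) \<union> Inr ` (g ` (X \<inter> Y))" for X
    by (auto simp: f_def image_iff)
  have "inj_on f E"
    using bij_betw_imp_inj_on[OF g] by (auto simp: inj_on_def f_def)
  moreover have "f ` E = ground (dsum (delete M Y) (U k (card Y)))"
    using \<open>Y \<subseteq> E\<close> bij_betw_imp_surj_on[OF g]
    by (simp add: f_image ground_dsum ground_delete ground_U Int_absorb1)
  moreover have "X \<in> indep M \<longleftrightarrow> f ` X \<in> indep (dsum (delete M Y) (U k (card Y)))"
    if "X \<subseteq> E" for X
  proof -
    have "card (g ` (X \<inter> Y)) = card (X \<inter> Y)"
      using bij_betw_imp_inj_on[OF g] by (simp add: card_image inj_on_subset)
    moreover have "g ` (X \<inter> Y) \<subseteq> {0..<card Y}" using bij_betw_imp_surj_on[OF g] by blast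
    ultimately show ?thesis
      using indep_iff_separator_parts[OF Y that] uniform[of "X \<inter> Y"]
      by (auto simp: f_image Inl_Inr_image_in_indep_dsum indep_delete indep_U)
  qed
  ultimately show ?thesis unfolding iso_def bij_betw_def by blast
qed

lemma paving_delete_iff:
  "paving (delete M D) \<longleftrightarrow> (\<forall>S\<subseteq>E - D. card S < r (E - D) \<longrightarrow> r S = card S)"
proof -
  interpret del: wf_matroid "delete M D" by unfold_locales (rule matroid_delete)
  have "S - D = S" if "S \<subseteq> E - D" for S using that by blast
  then show ?thesis by (simp add: del.paving_iff ground_delete rk_delete)
qed

lemma paving_dual_delete_iff:
  "paving (dual (delete M D)) \<longleftrightarrow> (\<forall>S\<subseteq>E - D. r (E - D) < card S \<longrightarrow> r S = r (E - D))"
proof -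
  interpret del: wf_matroid "delete M D" by unfold_locales (rule matroid_delete)
  have "S - D = S" if "S \<subseteq> E - D" for S using that by blast
  then show ?thesis by (simp add: del.paving_dual_iff ground_delete rk_delete)
qed

lemma paving_delete_dependent_separator:
  assumes low_rank: "low_rank_nullity_le_1 M" and D: "separator M D" "r D < card D"
  shows "paving (delete M D)"
  unfolding paving_delete_iff
proof (intro allI impI)
  fix S assume S: "S \<subseteq> E - D" "card S < r (E - D)"
  show "r S = card S"
  proof (rule ccontr)
    assume "r S \<noteq> card S"
    moreover have "r S \<le> card S" using rk_le_card finite_subset_ground S(1) by blast
    moreover have "r (S \<union> D) \<le> r S + r D" by (rule rk_union_le)
    moreover have "r (E - D) + r D = r E" using D(1) by (simp add: separator_def)
    ultimately have "r (S \<union> D) + 2 \<le> r E" using S(2) by linarith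
    moreover have "S \<union> D \<subseteq> E" using S(1) D(1) by (auto simp: separator_def)
    ultimately have "card (S \<union> D) \<le> r (S \<union> D) + 1"
      using low_rank unfolding low_rank_nullity_le_1_def by blast
    moreover have "card (S \<union> D) = card S + card D"
      using S(1) \<open>S \<union> D \<subseteq> E\<close> finite_subset_ground by (intro card_Un_disjoint) auto
    ultimately show False
      using \<open>r S \<noteq> card S\<close> \<open>r S \<le> card S\<close> rk_union_le[of S D] D(2) by linarith
  qed
qed

lemma dual_paving_delete_rank_1_separator:
  assumes low_rank: "low_rank_nullity_le_1 M" and D: "separator M D" "r D = 1"
  shows "paving (dual (delete M D))"
  unfolding paving_dual_delete_iff
proof (intro allI impI)
  fix S assume S: "S \<subseteq> E - D" "r (E - D) < card S"
  show "r S = r (E - D)"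
  proof (rule ccontr)
    assume "r S \<noteq> r (E - D)"
    then have "r S + 2 \<le> r E"
      using rk_mono[OF S(1)] D unfolding separator_def by linarith
    then have "card S \<le> r S + 1"
      using low_rank S(1) unfolding low_rank_nullity_le_1_def by auto
    then show False using S(2) rk_mono[OF S(1)] \<open>r S \<noteq> r (E - D)\<close> by linarith
  qed
qed

lemma rk_ground_le_delete_singleton: "e \<in> E \<Longrightarrow> r E \<le> r (E - {e}) + r {e}"
  using rk_union_le[of "E - {e}" "{e}"] by (simp add: insert_absorb)

lemma loop_splits_off:
  assumes low_rank: "low_rank_nullity_le_1 M" and e: "e \<in> E" "r {e} = 0"
  shows "\<exists>Mp :: 'a matroid. matroid Mp \<and> paving Mp \<and> iso M (dsum Mp (U 0 1))"
proof -
  have sep: "separator M {e}"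
    using rk_ground_le_delete_singleton[OF e(1)] e rk_le_rk_ground[of "E - {e}"]
    by (simp add: separator_def)
  have "X \<in> indep M \<longleftrightarrow> card X \<le> 0" if "X \<subseteq> {e}" for X
    using that e(2) empty_indep rk_indep[of "{e}"] by (auto simp: subset_singleton_iff)
  then have "iso M (dsum (delete M {e}) (U 0 1))"
    using iso_dsum_delete_uniform_separator[OF sep] by fastforce
  moreover have "paving (delete M {e})"
    using paving_delete_dependent_separator[OF low_rank sep] e(2) by simp
  ultimately show ?thesis using matroid_delete by blast
qed

lemma coloop_splits_off:
  assumes low_rank: "low_rank_nullity_le_1 M" and e: "e \<in> E" "r (E - {e}) < r E"
  shows "\<exists>Mp :: 'a matroid. matroid Mp \<and> paving Mp \<and> iso M (dsum (dual Mp) (U 1 1))"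
proof -
  interpret del: wf_matroid "delete M {e}" by unfold_locales (rule matroid_delete)
  have rk_e: "r {e} = 1" "r (E - {e}) + 1 = r E"
    using rk_ground_le_delete_singleton[OF e(1)] rk_le_card[of "{e}"] e(2) by auto
  then have sep: "separator M {e}" using e(1) by (simp add: separator_def)
  have "X \<in> indep M \<longleftrightarrow> card X \<le> 1" if "X \<subseteq> {e}" for X
    using that rk_e e(1) empty_indep indep_iff_rk_eq_card[of "{e}"]
    by (auto simp: subset_singleton_iff)
  then have "iso M (dsum (delete M {e}) (U 1 1))"
    using iso_dsum_delete_uniform_separator[OF sep] by fastforce
  moreover have "paving (dual (delete M {e}))"
    using dual_paving_delete_rank_1_separator[OF low_rank sep rk_e(1)] .
  ultimately show ?thesis
    using del.matroid_dual del.dual_dual by metis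
qed

lemma parallel_pair_separator_splits_off:
  assumes low_rank: "low_rank_nullity_le_1 M"
    and Y: "separator M Y" "card Y = 2" "r Y = 1" and no_loops: "\<forall>y\<in>Y. r {y} = 1"
  shows "\<exists>Mp :: 'a matroid. matroid Mp \<and> sparse_paving Mp \<and> iso M (dsum Mp (U 1 2))"
proof -
  have "Y \<subseteq> E" using Y(1) by (simp add: separator_def)
  have "X \<in> indep M \<longleftrightarrow> card X \<le> 1" if "X \<subseteq> Y" for X
  proof (cases "X = Y")
    case False
    with that Y(2) have "X = {} \<or> (\<exists>y\<in>Y. X = {y})"
      by (auto simp: card_2_iff subset_insert_iff)
    then show ?thesis
      using no_loops empty_indep indep_iff_rk_eq_card \<open>Y \<subseteq> E\<close> by auto
  qed (use Y \<open>Y \<subseteq> E\<close> indep_iff_rk_eq_card in auto)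
  then have "iso M (dsum (delete M Y) (U 1 2))"
    using iso_dsum_delete_uniform_separator[OF Y(1)] Y(2) by fastforce
  moreover have "sparse_paving (delete M Y)"
    using paving_delete_dependent_separator[OF low_rank Y(1)]
      dual_paving_delete_rank_1_separator[OF low_rank Y(1)] Y(2,3)
    by (simp add: sparse_paving_def)
  ultimately show ?thesis using matroid_delete by blast
qed

lemma separator_rk_lt_card:
  assumes no_coloops: "\<forall>e\<in>E. r (E - {e}) = r E" and Z: "separator M Z" "Z \<noteq> {}"
  shows "r Z < card Z"
proof (rule ccontr)
  assume "\<not> r Z < card Z"
  then have indep_Z: "r Z = card Z"
    using rk_le_card[of Z] finite_subset_ground Z(1) by (force simp: separator_def)
  obtain z where z: "z \<in> Z" using Z(2) by blast
  then have "z \<in> E" using Z(1) by (auto simp: separator_def)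
  have "(E - {z}) \<inter> Z = Z - {z}" "E - {z} - Z = E - Z" using z Z(1) by (auto simp: separator_def)
  then have "r (E - {z}) = r (Z - {z}) + r (E - Z)"
    using separator_rk_split[OF Z(1), of "E - {z}"] by simp
  moreover have "r (Z - {z}) < card Z"
    using rk_le_card[of "Z - {z}"] card_Diff1_less[of Z z] finite_subset_ground Z(1) z
    by (fastforce simp: separator_def)
  ultimately show False
    using no_coloops \<open>z \<in> E\<close> indep_Z Z(1) by (simp add: separator_def)
qed

lemma paving_if_rk_ground_le_2:
  assumes no_loops: "\<forall>e\<in>E. r {e} = 1" and "r E \<le> 2"
  shows "paving M"
  unfolding paving_iff
proof (intro allI impI)
  fix S assume "S \<subseteq> E" "card S < r E"
  then have "card S = 0 \<or> card S = 1" using assms(2) by linarith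
  then have "S = {} \<or> (\<exists>x. S = {x})"
    using finite_subset_ground[OF \<open>S \<subseteq> E\<close>] by (auto simp: card_1_singleton_iff)
  then show "r S = card S" using no_loops rk_empty \<open>S \<subseteq> E\<close> by auto
qed

lemma dual_paving_if_card_ground_le:
  assumes no_coloops: "\<forall>e\<in>E. r (E - {e}) = r E" and "card E \<le> r E + 2"
  shows "paving (dual M)"
  unfolding paving_dual_iff
proof (intro allI impI)
  fix S assume S: "S \<subseteq> E" "r E < card S"
  show "r S = r E"
  proof (cases "S = E")
    case False
    then obtain x where x: "x \<in> E" "x \<notin> S" using S(1) by blast
    then have "S \<subseteq> E - {x}" using S(1) by blast
    moreover have "card (E - {x}) \<le> card S" using S(2) assms(2) x(1) finite_ground by simp
    ultimately have "S = E - {x}" using card_seteq finite_ground by blast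
    then show ?thesis using no_coloops x(1) by simp
  qed simp
qed

lemma parallel_pair_separator_if_disconnected:
  assumes low_rank: "low_rank_nullity_le_1 M" and "\<not> paving M" "\<not> paving (dual M)"
    and "disconnected M"
    and no_loops: "\<forall>e\<in>E. r {e} = 1" and no_coloops: "\<forall>e\<in>E. r (E - {e}) = r E"
  shows "\<exists>Y. separator M Y \<and> card Y = 2 \<and> r Y = 1"
proof -
  obtain X where X: "separator M X" "X \<noteq> {}" "E - X \<noteq> {}"
    using \<open>disconnected M\<close> by (auto simp: disconnected_def separator_def)
  have sides: "1 \<le> r Z \<and> r Z < card Z" if Z: "separator M Z" "Z \<noteq> {}" for Z
  proof
    obtain z where "z \<in> Z" using Z(2) by blast
    then show "1 \<le> r Z"
      using no_loops rk_mono[of "{z}" Z] Z(1) by (force simp: separator_def)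
  qed (rule separator_rk_lt_card[OF no_coloops Z])
  note X_sides = sides[OF X(1,2)] sides[OF separator_complement[OF X(1)] X(3)]
  have rk_E: "r X + r (E - X) = r E" using X(1) by (simp add: separator_def)
  have "\<not> (r X = 1 \<and> r (E - X) = 1)"
    using paving_if_rk_ground_le_2[OF no_loops] \<open>\<not> paving M\<close> rk_E by auto
  moreover have "r X = 1 \<or> r (E - X) = 1"
  proof (rule ccontr)
    assume "\<not> ?thesis"
    then have "r X + 2 \<le> r E" "r (E - X) + 2 \<le> r E" using X_sides rk_E by linarith+
    then have "card X \<le> r X + 1" "card (E - X) \<le> r (E - X) + 1"
      using low_rank X(1) unfolding low_rank_nullity_le_1_def separator_def by blast+
    moreover have "card E = card X + card (E - X)"
      using X(1) finite_ground card_Int_Diff[of E X] by (simp add: separator_def Int_absorb1)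
    ultimately show False
      using dual_paving_if_card_ground_le[OF no_coloops] \<open>\<not> paving (dual M)\<close> rk_E by simp
  qed
  ultimately have "\<exists>Z\<in>{X, E - X}. r Z = 1 \<and> r Z + 2 \<le> r E"
    using X_sides rk_E by auto
  then obtain Z where "Z \<in> {X, E - X}" and Z: "r Z = 1" "r Z + 2 \<le> r E" by blast
  moreover from this have "separator M Z" "Z \<noteq> {}"
    using X separator_complement[OF X(1)] by auto
  ultimately have "card Z \<le> r Z + 1"
    using low_rank unfolding low_rank_nullity_le_1_def separator_def by blast
  then show ?thesis using sides[OF \<open>separator M Z\<close> \<open>Z \<noteq> {}\<close>] Z \<open>separator M Z\<close>
    by (intro exI[of _ Z]) simp
qed

end

section \<open>Direct sums with uniform matroids\<close>

lemma card_Inl_Inr_image: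
  "finite I \<Longrightarrow> finite J \<Longrightarrow> card (Inl ` I \<union> Inr ` J) = card I + card J"
  by (subst card_Un_disjoint) (auto simp: card_image)

lemma Inl_Inr_vimage: "Inl ` (Inl -` Z) \<union> Inr ` (Inr -` Z) = Z"
  by (auto simp: image_iff) (metis sum.exhaust)

lemma matroid_U: "matroid (U k n)"
  unfolding matroid_def ground_U indep_U mem_Collect_eq
proof (intro conjI allI impI ballI)
  fix X Y :: "nat set"
  assume X: "X \<subseteq> {0..<n} \<and> card X \<le> k" and Y: "Y \<subseteq> {0..<n} \<and> card Y \<le> k"
    and "card X < card Y"
  moreover have "finite X" using X finite_subset by blast
  ultimately obtain y where "y \<in> Y" "y \<notin> X" using card_mono[of X Y] by (meson leD subsetI)
  moreover have "card (insert y X) \<le> k"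
    using \<open>y \<notin> X\<close> \<open>finite X\<close> \<open>card X < card Y\<close> Y by simp
  moreover have "insert y X \<subseteq> {0..<n}" using X Y \<open>y \<in> Y\<close> by auto
  ultimately show "\<exists>y\<in>Y - X. insert y X \<subseteq> {0..<n} \<and> card (insert y X) \<le> k"
    by blast
next
  fix X Y :: "nat set" assume "Y \<subseteq> {0..<n} \<and> card Y \<le> k" "X \<subseteq> Y"
  moreover have "finite Y" using \<open>Y \<subseteq> {0..<n} \<and> card Y \<le> k\<close> finite_subset by blast
  ultimately show "card X \<le> k" using card_mono[of Y X] by linarith
qed auto

lemma rk_U: "T \<subseteq> {0..<n} \<Longrightarrow> rk (U k n) T = min k (card T)"
proof -
  assume T: "T \<subseteq> {0..<n}"
  have "min k (card T) \<le> card T" by simp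
  then obtain I where "I \<subseteq> T" "card I = min k (card T)" by (rule obtain_subset_with_card_n)
  moreover have "card I \<le> card T" if "I \<subseteq> T" for I
    using T that finite_subset card_mono by (metis finite_atLeastLessThan)
  ultimately show ?thesis
    using T by (intro rk_eqI[of _ _ _ I]) (auto simp: indep_U)
qed

lemma rk_dsum:
  assumes "matroid A" "matroid B"
  shows "rk (dsum A B) (Inl ` S \<union> Inr ` T) = rk A S + rk B T"
proof -
  interpret A: wf_matroid A by unfold_locales (rule assms(1))
  interpret B: wf_matroid B by unfold_locales (rule assms(2))
  obtain I J where I: "I \<in> indep A" "I \<subseteq> S" "card I = rk A S"
    and J: "J \<in> indep B" "J \<subseteq> T" "card J = rk B T"
    using A.obtain_indep_card_rk B.obtain_indep_card_rk by metis
  show ?thesis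
  proof (rule rk_eqI[of _ _ _ "Inl ` I \<union> Inr ` J"])
    fix K assume "K \<in> indep (dsum A B)" and K: "K \<subseteq> Inl ` S \<union> Inr ` T"
    then obtain I' J' where "K = Inl ` I' \<union> Inr ` J'" "I' \<in> indep A" "J' \<in> indep B"
      by (auto simp: indep_dsum)
    moreover from this have "I' \<subseteq> S" "J' \<subseteq> T"
      using K Inl_Inr_image_subset_iff by metis+
    ultimately show "card K \<le> rk A S + rk B T"
      using A.card_le_rk B.card_le_rk A.indep_finite B.indep_finite
      by (simp add: card_Inl_Inr_image add_mono)
  qed (use I J A.indep_finite B.indep_finite
      in \<open>auto simp: Inl_Inr_image_in_indep_dsum card_Inl_Inr_image\<close>)
qed

lemma rk_iso:
  assumes f: "bij_betw f (ground M) (ground N)"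
    and f_indep: "\<forall>X. X \<subseteq> ground M \<longrightarrow> (X \<in> indep M \<longleftrightarrow> f ` X \<in> indep N)"
    and S: "S \<subseteq> ground M"
  shows "rk M S = rk N (f ` S)"
proof -
  have inj: "inj_on f S" using bij_betw_imp_inj_on[OF f] S by (rule inj_on_subset)
  have "{J \<in> indep N. J \<subseteq> f ` S} = image f ` {I \<in> indep M. I \<subseteq> S}"
  proof (intro set_eqI iffI)
    fix J assume J: "J \<in> {J \<in> indep N. J \<subseteq> f ` S}"
    then have J_image: "J = f ` (S \<inter> f -` J)" by blast
    moreover have "S \<inter> f -` J \<in> indep M"
      using f_indep[rule_format, of "S \<inter> f -` J"] S J J_image by auto
    ultimately show "J \<in> image f ` {I \<in> indep M. I \<subseteq> S}" by blast
  qed (use f_indep S in auto)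
  moreover have "card (f ` I) = card I" if "I \<subseteq> S" for I
    using inj that by (simp add: card_image inj_on_subset)
  ultimately have "card ` {J \<in> indep N. J \<subseteq> f ` S} = card ` {I \<in> indep M. I \<subseteq> S}"
    by (auto simp: image_image intro!: image_cong)
  then show ?thesis by (simp add: rk_def)
qed

lemma low_rank_nullity_le_1_if_iso_dsum:
  assumes "matroid A" "matroid B" and iso: "iso M (dsum A B)"
    and parts: "\<And>S T. S \<subseteq> ground A \<Longrightarrow> T \<subseteq> ground B \<Longrightarrow>
      rk A S + rk B T + 2 \<le> rk A (ground A) + rk B (ground B) \<Longrightarrow>
      card S + card T \<le> rk A S + rk B T + 1"
  shows "low_rank_nullity_le_1 M"
  unfolding low_rank_nullity_le_1_def
proof (intro allI impI)
  interpret A: wf_matroid A by unfold_locales (rule assms(1))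
  interpret B: wf_matroid B by unfold_locales (rule assms(2))
  obtain f where f: "bij_betw f (ground M) (ground (dsum A B))"
    and f_indep: "\<forall>X. X \<subseteq> ground M \<longrightarrow> (X \<in> indep M \<longleftrightarrow> f ` X \<in> indep (dsum A B))"
    using iso unfolding iso_def by blast
  have split: "rk M X = rk A (Inl -` f ` X) + rk B (Inr -` f ` X)"
    "card X = card (Inl -` f ` X) + card (Inr -` f ` X)"
    "Inl -` f ` X \<subseteq> ground A" "Inr -` f ` X \<subseteq> ground B"
    if "X \<subseteq> ground M" for X
  proof -
    have "f ` X \<subseteq> Inl ` ground A \<union> Inr ` ground B"
      using bij_betw_imp_surj_on[OF f] image_mono[OF that, of f] by (simp add: ground_dsum)
    then show "Inl -` f ` X \<subseteq> ground A" "Inr -` f ` X \<subseteq> ground B" by auto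
    then show "rk M X = rk A (Inl -` f ` X) + rk B (Inr -` f ` X)"
      using rk_iso[OF f f_indep that] rk_dsum[OF assms(1,2)] by (metis Inl_Inr_vimage)
    have "card X = card (f ` X)"
      using bij_betw_imp_inj_on[OF f] that by (simp add: card_image inj_on_subset)
    then show "card X = card (Inl -` f ` X) + card (Inr -` f ` X)"
      using card_Inl_Inr_image A.finite_subset_ground B.finite_subset_ground
        \<open>Inl -` f ` X \<subseteq> ground A\<close> \<open>Inr -` f ` X \<subseteq> ground B\<close> by (metis Inl_Inr_vimage)
  qed
  have "Inl -` f ` ground M = ground A" "Inr -` f ` ground M = ground B"
    using bij_betw_imp_surj_on[OF f] by (auto simp: ground_dsum)
  then have rk_ground: "rk M (ground M) = rk A (ground A) + rk B (ground B)"
    using split(1)[of "ground M"] by simp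
  fix S assume "S \<subseteq> ground M" "rk M S + 2 \<le> rk M (ground M)"
  then show "card S \<le> rk M S + 1"
    using parts split[of S] rk_ground by simp
qed

context wf_matroid
begin

lemma low_rank_nullity_le_1_dsum_U01:
  assumes "paving M" "matroid N" "iso N (dsum M (U 0 1))"
  shows "low_rank_nullity_le_1 N"
proof (rule low_rank_nullity_le_1_if_iso_dsum[OF matroid matroid_U assms(3)])
  fix S T assume S: "S \<subseteq> E" and T: "T \<subseteq> ground (U 0 1)"
    and "r S + rk (U 0 1) T + 2 \<le> r E + rk (U 0 1) (ground (U 0 1))"
  moreover have "card T \<le> 1" using T card_mono[of "{0..<1}" T] by (simp add: ground_U)
  ultimately show "card S + card T \<le> r S + rk (U 0 1) T + 1"
    using paving_low_rank_rk_eq_card[OF assms(1) S] rk_U[of T 1 0] rk_U[of "{0..<1}" 1 0]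
    by (simp add: ground_U)
qed

lemma low_rank_nullity_le_1_dual_dsum_U11:
  assumes "paving M" "matroid N" "iso N (dsum (dual M) (U 1 1))"
  shows "low_rank_nullity_le_1 N"
proof (rule low_rank_nullity_le_1_if_iso_dsum[OF matroid_dual matroid_U assms(3)])
  interpret dual: wf_matroid "dual M" by unfold_locales (rule matroid_dual)
  fix S T assume S: "S \<subseteq> ground (dual M)" and T: "T \<subseteq> ground (U 1 1)"
    and low: "rk (dual M) S + rk (U 1 1) T + 2 \<le>
      rk (dual M) (ground (dual M)) + rk (U 1 1) (ground (U 1 1))"
  have "card T \<le> 1" using T card_mono[of "{0..<1}" T] by (simp add: ground_U)
  then have "rk (U 1 1) T = card T" "rk (U 1 1) (ground (U 1 1)) = 1"
    using rk_U[of T 1 1] rk_U[of "{0..<1}" 1 1] T by (simp_all add: ground_U)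
  moreover have "card S \<le> rk (dual M) S + 1"
    using dual.dual_paving_nonspanning_nullity_le_1[OF _ S] assms(1) low calculation
    by (simp add: dual_dual)
  ultimately show "card S + card T \<le> rk (dual M) S + rk (U 1 1) T + 1" by simp
qed

lemma low_rank_nullity_le_1_dsum_U12:
  assumes "sparse_paving M" "matroid N" "iso N (dsum M (U 1 2))"
  shows "low_rank_nullity_le_1 N"
proof (rule low_rank_nullity_le_1_if_iso_dsum[OF matroid matroid_U assms(3)])
  fix S T assume S: "S \<subseteq> E" and T: "T \<subseteq> ground (U 1 2)"
    and low: "r S + rk (U 1 2) T + 2 \<le> r E + rk (U 1 2) (ground (U 1 2))"
  have "card T \<le> 2" using T card_mono[of "{0..<2}" T] by (simp add: ground_U)
  moreover have "rk (U 1 2) T = min 1 (card T)" "rk (U 1 2) (ground (U 1 2)) = 1"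
    using rk_U[of T 2 1] rk_U[of "{0..<2}" 2 1] T by (simp_all add: ground_U)
  moreover have "r S = card S" if "card T > 0"
    using paving_low_rank_rk_eq_card[OF _ S] assms(1) low that calculation
    by (simp add: sparse_paving_def)
  moreover have "card S \<le> r S + 1" if "card T = 0"
    using dual_paving_nonspanning_nullity_le_1[OF _ S] assms(1) low that calculation
    by (simp add: sparse_paving_def)
  ultimately show "card S + card T \<le> r S + rk (U 1 2) T + 1" by fastforce
qed

lemma summand_splits_off_if_disconnected:
  assumes low_rank: "low_rank_nullity_le_1 M" and "disconnected M"
    and "\<not> paving M" "\<not> paving (dual M)"
  shows "(\<exists>Mp :: 'a matroid. matroid Mp \<and> paving Mp \<and>
            (iso M (dsum Mp (U 0 1)) \<or> iso M (dsum (dual Mp) (U 1 1)))) \<or>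
         (\<exists>Mp :: 'a matroid. matroid Mp \<and> sparse_paving Mp \<and> iso M (dsum Mp (U 1 2)))"
proof -
  have "r {e} = 0 \<or> r {e} = 1" "r (E - {e}) < r E \<or> r (E - {e}) = r E" for e
    using rk_le_card[of "{e}"] rk_le_rk_ground[of "E - {e}"] by auto
  then consider (loop) e where "e \<in> E" "r {e} = 0" | (coloop) e where "e \<in> E" "r (E - {e}) < r E"
    | (neither) "\<forall>e\<in>E. r {e} = 1" "\<forall>e\<in>E. r (E - {e}) = r E"
    by blast
  then show ?thesis
  proof cases
    case neither
    then obtain Y where Y: "separator M Y" "card Y = 2" "r Y = 1"
      using parallel_pair_separator_if_disconnected assms by blast
    moreover have "\<forall>y\<in>Y. r {y} = 1" using neither(1) Y(1) by (auto simp: separator_def)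
    ultimately show ?thesis using parallel_pair_separator_splits_off[OF low_rank] by blast
  qed (use loop_splits_off[OF low_rank] coloop_splits_off[OF low_rank] in blast)+
qed

end

theorem proposition3p1:
  fixes M :: "'a matroid"
  assumes "matroid M" and "disconnected M"
  shows "two_two_uniform M \<longleftrightarrow>
           (paving M \<or> paving (dual M)) \<or>
           (\<exists>Mp :: 'a matroid. matroid Mp \<and> paving Mp \<and>
               (iso M (dsum Mp (U 0 1)) \<or> iso M (dsum (dual Mp) (U 1 1)))) \<or>
           (\<exists>Mp :: 'a matroid. matroid Mp \<and> sparse_paving Mp \<and> iso M (dsum Mp (U 1 2)))"
proof -
  interpret wf_matroid M by unfold_locales (rule assms(1))
  note summand_iso_imp_low_rank =
    wf_matroid.low_rank_nullity_le_1_dsum_U01[OF wf_matroid.intro]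
    wf_matroid.low_rank_nullity_le_1_dual_dsum_U11[OF wf_matroid.intro]
    wf_matroid.low_rank_nullity_le_1_dsum_U12[OF wf_matroid.intro]
  show ?thesis
  proof (cases "paving M \<or> paving (dual M)")
    case True
    then show ?thesis
      using low_rank_nullity_le_1_if_paving_or_dual_paving two_two_uniform_iff_low_rank_nullity_le_1
      by blast
  next
    case False
    then have "\<not> paving M" "\<not> paving (dual M)" by auto
    then show ?thesis
      unfolding two_two_uniform_iff_low_rank_nullity_le_1
      using summand_splits_off_if_disconnected[OF _ assms(2)]
        summand_iso_imp_low_rank[OF _ _ assms(1)] by blast
  qed
qed

end
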